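(* Let $H\in\mathbb{R}^{n\times d}$ have rank $h$, $\Sigma\in\mathbb{R}^{n\times n}$ symmetric positive definite, and let $\Gamma_i$ be the empirical covariances of deterministic EKI iterates $v_{i+1}^{(j)}=v_i^{(j)}+\Gamma_iH^\top(H\Gamma_iH^\top+\Sigma)^{-1}(y-Hv_i^{(j)})$. Fix $i\ge0$, and let $w_1,\dots,w_n$ and $r$ be as in the context, with $H\Gamma_iH^\top w_\ell=\delta_{\ell,i}\Sigma w_\ell$. For $\ell=1,\dots,r$ let $u_\ell=\frac1{\delta_{\ell,i}}\Gamma_iH^\top w_\ell$, and if $h>r$, for $\ell=r+1,\dots,h$ let $u_\ell=H^+\Sigma w_\ell$. Then for all $\ell\le h$, $u_\ell$ is an eigenvector of $\Gamma_iH^\top\Sigma^{-1}H$ with eigenvalue $\delta_{\ell,i}$, i.e. $\Gamma_iH^\top\Sigma^{-1}Hu_\ell=\delta_{\ell,i}u_\ell$, and conversely $w_\ell=\Sigma^{-1}Hu_\ell$ for all $\ell\le h$.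
   Context: $H^+=(H^\top\Sigma^{-1}H)^\dagger H^\top\Sigma^{-1}$ with $\dagger$ the Moore–Penrose pseudoinverse. Empirical covariance $\Gamma_i=\frac1{J-1}\sum_j(v_i^{(j)}-\bar v_i)(v_i^{(j)}-\bar v_i)^\top$. $r$ is the number of positive eigenvalues of the pencil $(H\Gamma_iH^\top,\Sigma)$, and $w_1,\dots,w_n$ is a $\Sigma$-orthogonal basis of $\mathbb{R}^n$ of generalized eigenvectors of this pencil with: $w_1,\dots,w_r\in\mathsf{Ran}(\Sigma^{-1}H)$ having positive eigenvalues; $w_{r+1},\dots,w_h\in\mathsf{Ran}(\Sigma^{-1}H)$ having eigenvalue zero; $w_{h+1},\dots,w_n$ a basis of $\mathsf{Ker}(H^\top)$. *)

theory Defs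
  imports "HOL-Analysis.Analysis"
begin

definition mp_pinv :: "real^'n^'m \<Rightarrow> real^'m^'n" where
  "mp_pinv A = (THE X. A ** X ** A = A \<and> X ** A ** X = X \<and>
                       transpose (A ** X) = A ** X \<and> transpose (X ** A) = X ** A)"

definition wpinv :: "real^'d^'n \<Rightarrow> real^'n^'n \<Rightarrow> real^'n^'d" where
  "wpinv H S = mp_pinv (transpose H ** matrix_inv S ** H) ** transpose H ** matrix_inv S"

definition outer :: "real^'a \<Rightarrow> real^'b \<Rightarrow> real^'b^'a" where
  "outer x z = (\<chi> a b. x $ a * z $ b)"

definition ens_mean :: "nat \<Rightarrow> (nat \<Rightarrow> real^'d) \<Rightarrow> real^'d" where
  "ens_mean J v = (1 / real J) *\<^sub>R (\<Sum>j\<in>{1..J}. v j)"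

definition emp_cov :: "nat \<Rightarrow> (nat \<Rightarrow> real^'d) \<Rightarrow> real^'d^'d" where
  "emp_cov J v = (1 / (real J - 1)) *\<^sub>R
     (\<Sum>j\<in>{1..J}. outer (v j - ens_mean J v) (v j - ens_mean J v))"

definition eki_step :: "real^'d^'n \<Rightarrow> real^'n^'n \<Rightarrow> real^'n \<Rightarrow> nat \<Rightarrow>
                        (nat \<Rightarrow> real^'d) \<Rightarrow> (nat \<Rightarrow> real^'d)" where
  "eki_step H S y J v = (\<lambda>j. v j +
     (emp_cov J v ** transpose H ** matrix_inv (H ** emp_cov J v ** transpose H + S))
       *v (y - H *v v j))"

definition eki_iter :: "real^'d^'n \<Rightarrow> real^'n^'n \<Rightarrow> real^'n \<Rightarrow> nat \<Rightarrow>
                        (nat \<Rightarrow> real^'d) \<Rightarrow> nat \<Rightarrow> (nat \<Rightarrow> real^'d)" where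
  "eki_iter H S y J v0 i = (eki_step H S y J ^^ i) v0"

definition eki_Gamma :: "real^'d^'n \<Rightarrow> real^'n^'n \<Rightarrow> real^'n \<Rightarrow> nat \<Rightarrow>
                        (nat \<Rightarrow> real^'d) \<Rightarrow> nat \<Rightarrow> real^'d^'d" where
  "eki_Gamma H S y J v0 i = emp_cov J (eki_iter H S y J v0 i)"

end

theory Submission
  imports Defs
begin

(* For l <= r the pencil equation H Gamma H^T w = delta Sigma w with delta > 0 directly gives
   Sigma^-1 H u = w, and then Gamma H^T Sigma^-1 H u = Gamma H^T w = delta u.
   For r < l <= h we have delta = 0 and w = Sigma^-1 H x.  With M = H^T Sigma^-1 H the Penrose
   identity M M^+ M = M, together with positive definiteness of Sigma^-1, yields H H^+ H = H,
   so H u = H x and Sigma^-1 H u = w; moreover w^T H Gamma H^T w = 0 forces Gamma H^T w = 0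
   because an empirical covariance is positive semidefinite.  In both cases u <> 0 since w <> 0. *)

lemma inner_matrix_vector_transpose:
  fixes A :: "real^'n^'m"
  shows "(A *v x) \<bullet> y = x \<bullet> (transpose A *v y)"
  by (metis dot_lmul_matrix inner_commute transpose_matrix_vector)

lemma outer_mult_vector: "outer x z *v v = (z \<bullet> v) *\<^sub>R (x::real^'a)" for z v :: "real^'b"
  by (simp add: vec_eq_iff outer_def matrix_vector_mult_def inner_vec_def sum_distrib_left mult_ac)

lemma orthogonal_projection_matrix_exists:
  fixes V :: "(real^'n) set"
  assumes "subspace V"
  obtains Q :: "real^'n^'n"
  where "transpose Q = Q" "\<And>x. Q *v x \<in> V" "\<And>x. x \<in> V \<Longrightarrow> Q *v x = x"
    "\<And>x v. v \<in> V \<Longrightarrow> (x - Q *v x) \<bullet> v = 0"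
proof -
  obtain T where T: "pairwise orthogonal T" "span T = V"
    using orthogonal_basis_subspace[OF assms] by metis
  define Q :: "real^'n^'n" where "Q = (\<chi> i j. \<Sum>b\<in>T. b $ i * b $ j / (b \<bullet> b))"
  have Q: "Q *v x = (\<Sum>b\<in>T. (b \<bullet> x / (b \<bullet> b)) *\<^sub>R b)" for x
    by (simp add: Q_def vec_eq_iff matrix_vector_mult_def inner_vec_def sum_distrib_left
        sum_distrib_right sum_divide_distrib mult_ac flip: sum.swap[of _ T])
  have Q_range: "Q *v x \<in> V" for x
    unfolding Q T(2)[symmetric] by (intro span_sum span_mul span_base)
  have orth: "(x - Q *v x) \<bullet> v = 0" if "v \<in> V" for x v
    using Gram_Schmidt_step[OF T(1), of v x] that T(2) by (simp add: Q orthogonal_def inner_commute)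
  have "Q *v x = x" if "x \<in> V" for x
    using orth[of "x - Q *v x" x] Q_range that assms
    by (metis inner_eq_zero_iff right_minus_eq subspace_diff)
  moreover have "transpose Q = Q"
    by (simp add: Q_def transpose_def mult.commute)
  ultimately show thesis using that Q_range orth by blast
qed

definition moore_penrose :: "real^'n^'m \<Rightarrow> real^'m^'n \<Rightarrow> bool" where
  "moore_penrose A X \<longleftrightarrow> A ** X ** A = A \<and> X ** A ** X = X \<and>
     transpose (A ** X) = A ** X \<and> transpose (X ** A) = X ** A"

lemma moore_penrose_unique:
  fixes A :: "real^'n^'m" and X Y :: "real^'m^'n"
  assumes "moore_penrose A X" and "moore_penrose A Y"
  shows "X = Y"
proof -
  have X: "A ** X ** A = A" "X ** A ** X = X" "transpose (A ** X) = A ** X"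
    "transpose (X ** A) = X ** A"
    and Y: "A ** Y ** A = A" "Y ** A ** Y = Y" "transpose (A ** Y) = A ** Y"
    "transpose (Y ** A) = Y ** A"
    using assms unfolding moore_penrose_def by blast+
  have "X = X ** transpose (A ** X)" using X(2,3) by (simp add: matrix_mul_assoc)
  also have "\<dots> = X ** transpose (A ** Y ** A ** X)" using Y(1) by simp
  also have "\<dots> = X ** (A ** X) ** (A ** Y)"
    using X(3) Y(3) by (simp add: matrix_transpose_mul matrix_mul_assoc)
  also have "\<dots> = X ** A ** Y" by (metis X(2) matrix_mul_assoc)
  finally have XY: "X = X ** A ** Y" .
  have "Y = transpose (Y ** A) ** Y" using Y(2,4) by (simp add: matrix_mul_assoc)
  also have "\<dots> = transpose (Y ** (A ** X ** A)) ** Y" using X(1) by simp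
  also have "\<dots> = (X ** A) ** (Y ** A) ** Y"
    using X(4) Y(4) by (simp add: matrix_transpose_mul matrix_mul_assoc)
  also have "\<dots> = X ** A ** Y" by (metis Y(2) matrix_mul_assoc)
  finally show ?thesis using XY by simp
qed

lemma invertible_matrix_inv:
  assumes "invertible (A::real^'n^'n)"
  shows "A ** matrix_inv A = mat 1" "matrix_inv A ** A = mat 1"
  using someI_ex[OF assms[unfolded invertible_def]] by (simp_all add: matrix_inv_def)

lemma invertible_iff_kernel_trivial:
  "invertible (A::real^'n^'n) \<longleftrightarrow> (\<forall>x. A *v x = 0 \<longrightarrow> x = 0)"
  using invertible_left_inverse matrix_left_invertible_ker by blast

lemma symmetric_matrix_kernel_orthogonal_range:
  fixes M :: "real^'n^'n"
  assumes "transpose M = M"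
  shows "M *v z = 0 \<longleftrightarrow> (\<forall>x. z \<bullet> (M *v x) = 0)"
proof -
  have "z \<bullet> (M *v x) = (M *v z) \<bullet> x" for x
    using inner_matrix_vector_transpose[of M z x] assms by simp
  then show ?thesis by (metis inner_eq_zero_iff inner_zero_left)
qed

lemma symmetric_matrix_range_projection:
  fixes M :: "real^'n^'n"
  assumes M: "transpose M = M"
  obtains Q :: "real^'n^'n"
  where "transpose Q = Q" "M ** Q = M" "Q ** M = M" "Q ** Q = Q"
    "\<And>x. Q *v x \<in> range ((*v) M)" "\<And>x y. (x - Q *v x) \<bullet> (M *v y) = 0"
proof -
  have "subspace (range ((*v) M))"
    by (rule linear_subspace_image[OF matrix_vector_mul_linear subspace_UNIV])
  then obtain Q :: "real^'n^'n" where "transpose Q = Q" and QV: "\<And>x. Q *v x \<in> range ((*v) M)"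
    and Q_fix: "\<And>x. x \<in> range ((*v) M) \<Longrightarrow> Q *v x = x"
    and Q_orth: "\<And>x v. v \<in> range ((*v) M) \<Longrightarrow> (x - Q *v x) \<bullet> v = 0"
    by (rule orthogonal_projection_matrix_exists) auto
  have "M *v (x - Q *v x) = 0" for x
    using M Q_orth by (simp add: symmetric_matrix_kernel_orthogonal_range inner_commute)
  then have "M ** Q = M" by (simp add: matrix_eq algebra_simps flip: matrix_vector_mul_assoc)
  moreover have "Q ** M = M" using Q_fix by (simp add: matrix_eq flip: matrix_vector_mul_assoc)
  moreover have "Q ** Q = Q" using Q_fix QV by (simp add: matrix_eq flip: matrix_vector_mul_assoc)
  ultimately show thesis using that \<open>transpose Q = Q\<close> QV Q_orth by blast
qed

lemma moore_penrose_symmetric_exists: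
  fixes M :: "real^'n^'n"
  assumes M: "transpose M = M"
  shows "\<exists>X. moore_penrose M X"
proof -
  obtain Q where "transpose Q = Q" and MQ: "M ** Q = M" and QM: "Q ** M = M" and QQ: "Q ** Q = Q"
    and QV: "\<And>x. Q *v x \<in> range ((*v) M)" and Q_orth: "\<And>x y. (x - Q *v x) \<bullet> (M *v y) = 0"
    using symmetric_matrix_range_projection[OF M] by metis
  \<comment> \<open>T acts as M on range M and as the identity on its orthogonal complement ker M,
    so it is invertible, and matrix_inv T ** Q inverts M on its range.\<close>
  define T where "T = M + mat 1 - Q"
  have Tv: "T *v x = M *v x + (x - Q *v x)" for x
    by (simp add: T_def algebra_simps)
  have TQ: "T ** Q = M" and QT: "Q ** T = M"
    using MQ QM QQ by (simp_all add: matrix_eq Tv algebra_simps flip: matrix_vector_mul_assoc)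
  have "invertible T"
    unfolding invertible_iff_kernel_trivial
  proof (intro allI impI)
    fix x assume "T *v x = 0"
    then have Mx: "M *v x = - (x - Q *v x)"
      unfolding Tv by (simp add: add_eq_0_iff2)
    have "(M *v x) \<bullet> (M *v x) = - ((x - Q *v x) \<bullet> (M *v x))"
      by (subst (1) Mx) (simp only: inner_minus_left)
    also have "\<dots> = 0" using Q_orth by simp
    finally have "M *v x = 0" by simp
    with Mx have "x \<in> range ((*v) M)" using QV by (metis neg_equal_0_iff_equal right_minus_eq)
    with \<open>M *v x = 0\<close> show "x = 0"
      using M by (metis inner_eq_zero_iff rangeE symmetric_matrix_kernel_orthogonal_range)
  qed
  define Ti where "Ti = matrix_inv T"
  have TTi: "T ** Ti = mat 1" and TiT: "Ti ** T = mat 1"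
    using invertible_matrix_inv[OF \<open>invertible T\<close>] by (simp_all add: Ti_def)
  have MTi: "M ** Ti = Q" by (metis QT TTi matrix_mul_assoc matrix_mul_rid)
  have TiM: "Ti ** M = Q" by (metis TQ TiT matrix_mul_assoc matrix_mul_lid)
  have "Q ** Ti = Ti ** Q" by (metis MTi TiM matrix_mul_assoc)
  then have "moore_penrose M (Ti ** Q)"
    unfolding moore_penrose_def using MTi TiM QQ QM \<open>transpose Q = Q\<close>
    by (metis matrix_mul_assoc)
  then show ?thesis ..
qed

lemma moore_penrose_mp_pinv_symmetric:
  fixes M :: "real^'n^'n"
  assumes "transpose M = M"
  shows "moore_penrose M (mp_pinv M)"
proof -
  have "\<exists>!X. moore_penrose M X"
    using moore_penrose_symmetric_exists[OF assms] moore_penrose_unique by blast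
  then show ?thesis
    unfolding mp_pinv_def moore_penrose_def[symmetric] by (rule theI')
qed

lemma pos_def_invertible:
  fixes S :: "real^'n^'n"
  assumes "\<And>x. x \<noteq> 0 \<Longrightarrow> 0 < x \<bullet> (S *v x)"
  shows "invertible S"
  unfolding invertible_iff_kernel_trivial using assms by (metis inner_zero_right less_irrefl)

lemma matrix_inv_symmetric:
  fixes S :: "real^'n^'n"
  assumes "invertible S" and "transpose S = S"
  shows "transpose (matrix_inv S) = matrix_inv S"
proof -
  have "transpose (matrix_inv S) ** S = mat 1"
    using invertible_matrix_inv(1)[OF assms(1)] assms(2) by (metis matrix_transpose_mul transpose_mat)
  then show ?thesis
    by (metis invertible_matrix_inv(1)[OF assms(1)] matrix_mul_assoc matrix_mul_lid matrix_mul_rid)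
qed

lemma matrix_inv_pos_def:
  fixes S :: "real^'n^'n"
  assumes S_pd: "\<And>x. x \<noteq> 0 \<Longrightarrow> 0 < x \<bullet> (S *v x)" and "x \<noteq> 0"
  shows "0 < x \<bullet> (matrix_inv S *v x)"
proof -
  define z where "z = matrix_inv S *v x"
  have "x = S *v z"
    using invertible_matrix_inv(1)[OF pos_def_invertible[OF S_pd]]
    by (simp add: z_def matrix_vector_mul_assoc)
  have "x \<bullet> (matrix_inv S *v x) = x \<bullet> z" by (simp add: z_def)
  also have "\<dots> = z \<bullet> (S *v z)" using \<open>x = S *v z\<close> by (simp add: inner_commute)
  finally show ?thesis
    using S_pd[of z] \<open>x = S *v z\<close> \<open>x \<noteq> 0\<close> by (metis matrix_vector_mult_0_right)
qed

lemma wpinv_generalized_inverse: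
  fixes H :: "real^'d^'n" and S :: "real^'n^'n"
  assumes S_sym: "transpose S = S" and S_pd: "\<And>x. x \<noteq> 0 \<Longrightarrow> 0 < x \<bullet> (S *v x)"
  shows "H ** wpinv H S ** H = H"
proof -
  define Si where "Si = matrix_inv S"
  define M where "M = transpose H ** Si ** H"
  have "transpose Si = Si"
    unfolding Si_def using matrix_inv_symmetric[OF pos_def_invertible[OF S_pd] S_sym] .
  then have "transpose M = M" by (simp add: M_def matrix_transpose_mul matrix_mul_assoc)
  then have MXM: "M ** mp_pinv M ** M = M"
    using moore_penrose_mp_pinv_symmetric moore_penrose_def by blast
  have "H *v (x - (mp_pinv M ** M) *v x) = 0" for x
  proof -
    define z where "z = x - (mp_pinv M ** M) *v x"
    have "M *v z = 0"
      using MXM by (simp add: z_def algebra_simps matrix_vector_mul_assoc matrix_mul_assoc)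
    then have "(H *v z) \<bullet> (Si *v (H *v z)) = 0"
      by (metis M_def inner_matrix_vector_transpose inner_zero_right matrix_vector_mul_assoc)
    then show ?thesis
      using matrix_inv_pos_def[OF S_pd] unfolding z_def Si_def by (metis less_irrefl)
  qed
  moreover have "wpinv H S ** H = mp_pinv M ** M"
    by (simp add: wpinv_def M_def Si_def matrix_mul_assoc)
  ultimately show ?thesis
    by (simp add: matrix_eq algebra_simps flip: matrix_vector_mul_assoc)
qed

lemma emp_cov_mult_vector:
  fixes v :: "nat \<Rightarrow> real^'d"
  shows "emp_cov J v *v z =
     (1 / (real J - 1)) *\<^sub>R (\<Sum>j\<in>{1..J}. ((v j - ens_mean J v) \<bullet> z) *\<^sub>R (v j - ens_mean J v))"
proof -
  have "(\<Sum>j\<in>A. f j) *v z = (\<Sum>j\<in>A. f j *v z)" for A and f :: "nat \<Rightarrow> real^'d^'d"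
    by (induction A rule: infinite_finite_induct) (simp_all add: matrix_vector_mult_add_rdistrib)
  then show ?thesis
    by (simp add: emp_cov_def outer_mult_vector flip: scaleR_matrix_vector_assoc)
qed

lemma emp_cov_quadratic_form_eq_0_imp:
  fixes v :: "nat \<Rightarrow> real^'d"
  assumes "J \<ge> 2" and "z \<bullet> (emp_cov J v *v z) = 0"
  shows "emp_cov J v *v z = 0"
proof -
  let ?a = "\<lambda>j. v j - ens_mean J v"
  have "z \<bullet> (emp_cov J v *v z) = (1 / (real J - 1)) * (\<Sum>j\<in>{1..J}. (?a j \<bullet> z)\<^sup>2)"
    by (simp add: emp_cov_mult_vector inner_sum_right power2_eq_square inner_commute)
  then have "(\<Sum>j\<in>{1..J}. (?a j \<bullet> z)\<^sup>2) = 0" using assms by simp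
  then have "\<forall>j\<in>{1..J}. ?a j \<bullet> z = 0" by (simp add: sum_nonneg_eq_0_iff)
  then show ?thesis by (simp add: emp_cov_mult_vector)
qed

lemma pencil_eigenvector_nonzero_eigenvalue:
  fixes H :: "real^'d^'n" and S :: "real^'n^'n" and \<Gamma> :: "real^'d^'d"
  assumes "invertible S" and "\<delta> \<noteq> 0"
    and eig: "(H ** \<Gamma> ** transpose H) *v w = \<delta> *\<^sub>R (S *v w)"
  defines "u \<equiv> (1 / \<delta>) *\<^sub>R ((\<Gamma> ** transpose H) *v w)"
  shows "(\<Gamma> ** transpose H ** matrix_inv S ** H) *v u = \<delta> *\<^sub>R u"
    and "w = (matrix_inv S ** H) *v u"
proof -
  have "(matrix_inv S ** H) *v u = (1 / \<delta>) *\<^sub>R (matrix_inv S *v (\<delta> *\<^sub>R (S *v w)))"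
    using eig by (simp add: u_def matrix_vector_mult_scaleR matrix_mul_assoc
        flip: matrix_vector_mul_assoc)
  also have "\<dots> = w"
    using invertible_matrix_inv(2)[OF \<open>invertible S\<close>] \<open>\<delta> \<noteq> 0\<close>
    by (simp add: matrix_vector_mult_scaleR matrix_vector_mul_assoc)
  finally show w: "w = (matrix_inv S ** H) *v u" ..
  have "(\<Gamma> ** transpose H ** matrix_inv S ** H) *v u = (\<Gamma> ** transpose H) *v w"
    by (simp add: w matrix_mul_assoc flip: matrix_vector_mul_assoc)
  also have "\<dots> = \<delta> *\<^sub>R u" using \<open>\<delta> \<noteq> 0\<close> by (simp add: u_def)
  finally show "(\<Gamma> ** transpose H ** matrix_inv S ** H) *v u = \<delta> *\<^sub>R u" .
qed

lemma pencil_eigenvector_zero_eigenvalue: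
  fixes H :: "real^'d^'n" and S :: "real^'n^'n" and \<Gamma> :: "real^'d^'d"
  assumes S_sym: "transpose S = S" and S_pd: "\<And>x. x \<noteq> 0 \<Longrightarrow> 0 < x \<bullet> (S *v x)"
    and \<Gamma>_psd: "\<And>z. z \<bullet> (\<Gamma> *v z) = 0 \<Longrightarrow> \<Gamma> *v z = 0"
    and eig: "(H ** \<Gamma> ** transpose H) *v w = 0"
    and w_range: "w \<in> range (\<lambda>x. (matrix_inv S ** H) *v x)"
  defines "u \<equiv> wpinv H S *v (S *v w)"
  shows "(\<Gamma> ** transpose H ** matrix_inv S ** H) *v u = 0"
    and "w = (matrix_inv S ** H) *v u"
proof -
  obtain x where x: "w = (matrix_inv S ** H) *v x" using w_range by blast
  have "S *v w = H *v x"
    using invertible_matrix_inv(1)[OF pos_def_invertible[OF S_pd]]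
    by (simp add: x matrix_vector_mul_assoc matrix_mul_assoc)
  then have "H *v u = H *v x"
    using wpinv_generalized_inverse[OF S_sym S_pd, of H]
    by (simp add: u_def matrix_vector_mul_assoc matrix_mul_assoc)
  then show w: "w = (matrix_inv S ** H) *v u"
    by (simp add: x flip: matrix_vector_mul_assoc)
  have "(transpose H *v w) \<bullet> (\<Gamma> *v (transpose H *v w)) = w \<bullet> ((H ** \<Gamma> ** transpose H) *v w)"
    by (simp only: inner_matrix_vector_transpose transpose_transpose matrix_vector_mul_assoc
        matrix_mul_assoc)
  then have "\<Gamma> *v (transpose H *v w) = 0" using eig \<Gamma>_psd by simp
  then show "(\<Gamma> ** transpose H ** matrix_inv S ** H) *v u = 0"
    by (simp add: w matrix_mul_assoc flip: matrix_vector_mul_assoc)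
qed

theorem proposition3p13:
  fixes H :: "real^'d^'n" and S :: "real^'n^'n" and y :: "real^'n"
    and J :: nat and v0 :: "nat \<Rightarrow> real^'d" and i :: nat
    and \<Gamma> :: "real^'d^'d"
    and h r :: nat and w :: "nat \<Rightarrow> real^'n" and \<delta> :: "nat \<Rightarrow> real"
    and u :: "nat \<Rightarrow> real^'d"
  assumes rankH: "rank H = h"
    and S_sym: "transpose S = S"
    and S_pd: "\<And>x. x \<noteq> 0 \<Longrightarrow> x \<bullet> (S *v x) > 0"
    and J2: "J \<ge> 2"
    and Gamma_def: "\<Gamma> = eki_Gamma H S y J v0 i"
    and w_inj: "inj_on w {1..CARD('n)}"
    and w_indep: "independent (w ` {1..CARD('n)})"
    and w_span: "span (w ` {1..CARD('n)}) = UNIV"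
    and w_orth: "\<And>k l. k \<in> {1..CARD('n)} \<Longrightarrow> l \<in> {1..CARD('n)} \<Longrightarrow> k \<noteq> l \<Longrightarrow>
                   w k \<bullet> (S *v w l) = 0"
    and w_eig: "\<And>l. l \<in> {1..CARD('n)} \<Longrightarrow>
                   (H ** \<Gamma> ** transpose H) *v w l = \<delta> l *\<^sub>R (S *v w l)"
    and r_def: "r = card {l \<in> {1..CARD('n)}. \<delta> l > 0}"
    and r_le_h: "r \<le> h"
    and w_pos: "\<And>l. l \<in> {1..r} \<Longrightarrow>
                   \<delta> l > 0 \<and> w l \<in> range (\<lambda>x. (matrix_inv S ** H) *v x)"
    and w_zero: "\<And>l. l \<in> {r+1..h} \<Longrightarrow>
                   \<delta> l = 0 \<and> w l \<in> range (\<lambda>x. (matrix_inv S ** H) *v x)"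
    and w_ker: "\<And>l. l \<in> {h+1..CARD('n)} \<Longrightarrow> transpose H *v w l = 0"
    and w_ker_span: "span (w ` {h+1..CARD('n)}) = {x. transpose H *v x = 0}"
    and u_pos: "\<And>l. l \<in> {1..r} \<Longrightarrow>
                   u l = (1 / \<delta> l) *\<^sub>R ((\<Gamma> ** transpose H) *v w l)"
    and u_zero: "\<And>l. l \<in> {r+1..h} \<Longrightarrow> u l = wpinv H S *v (S *v w l)"
  shows "\<forall>l \<in> {1..h}.
           u l \<noteq> 0 \<and>
           (\<Gamma> ** transpose H ** matrix_inv S ** H) *v u l = \<delta> l *\<^sub>R u l \<and>
           w l = (matrix_inv S ** H) *v u l"
proof -
  have h_le: "h \<le> CARD('n)" using rank_bound[of H] rankH by simp
  have \<Gamma>_psd: "\<And>z. z \<bullet> (\<Gamma> *v z) = 0 \<Longrightarrow> \<Gamma> *v z = 0"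
    using emp_cov_quadratic_form_eq_0_imp[OF J2] by (simp add: Gamma_def eki_Gamma_def)
  have w_nonzero: "w l \<noteq> 0" if "l \<in> {1..h}" for l
  proof -
    from that h_le have "w l \<in> w ` {1..CARD('n)}" by simp
    then show ?thesis using w_indep dependent_zero by metis
  qed
  have eigvec: "(\<Gamma> ** transpose H ** matrix_inv S ** H) *v u l = \<delta> l *\<^sub>R u l
      \<and> w l = (matrix_inv S ** H) *v u l" if l: "l \<in> {1..h}" for l
  proof -
    from l h_le have eig: "(H ** \<Gamma> ** transpose H) *v w l = \<delta> l *\<^sub>R (S *v w l)"
      by (intro w_eig) simp
    show ?thesis
    proof (cases "l \<le> r")
      case True
      with l have "l \<in> {1..r}" by simp
      then have "\<delta> l \<noteq> 0" and "u l = (1 / \<delta> l) *\<^sub>R ((\<Gamma> ** transpose H) *v w l)"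
        using w_pos[of l] u_pos[of l] by auto
      with eig show ?thesis
        using pencil_eigenvector_nonzero_eigenvalue[OF pos_def_invertible[OF S_pd]] by metis
    next
      case False
      with l have "l \<in> {r+1..h}" by simp
      then have "\<delta> l = 0" and "w l \<in> range (\<lambda>x. (matrix_inv S ** H) *v x)"
        and "u l = wpinv H S *v (S *v w l)"
        using w_zero[of l] u_zero[of l] by auto
      with eig show ?thesis
        using pencil_eigenvector_zero_eigenvalue[OF S_sym S_pd \<Gamma>_psd] by (metis scale_zero_left)
    qed
  qed
  show ?thesis
    using eigvec w_nonzero by (metis matrix_vector_mult_0_right)
qed

end
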